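(* Let $G$ be a group of order $3^5$ generated by $f_1,\dots,f_5$ with $f_5\in Z(G)$, satisfying the commutator relations $[f_2,f_1]=f_3$, $[f_3,f_1]=f_4$, $[f_4,f_1]=[f_3,f_2]=f_5$, $[f_4,f_2]=[f_4,f_3]=1$, together with one of the following three sets of power relations: (a) $f_1^3=f_4^3=f_5^3=1$, $f_2^3=f_4^{-1}$, $f_3^3=f_5^{-1}$; (b) $f_4^3=f_5^3=1$, $f_1^3=f_5$, $f_2^3=f_4^{-1}$, $f_3^3=f_5^{-1}$; (c) $f_4^3=f_5^3=1$, $f_1^3=f_3^3=f_5^{-1}$, $f_2^3=f_4^{-1}$. Then $B_0(G)\neq 0$. In case (a), moreover $G/[G,G]\cong C_3\times C_3$.
   Context: $[g,h]=g^{-1}h^{-1}gh$; $Z(G)$ is the center. $B_0(G)=\bigcap_A \ker\{\mathrm{res}^G_A : H^2(G,\mathbb{Q}/\mathbb{Z})\to H^2(A,\mathbb{Q}/\mathbb{Z})\}$, where $A$ runs over all bicyclic subgroups of $G$ (cyclic groups or direct products of two cyclic groups), with trivial action on $\mathbb{Q}/\mathbb{Z}$. (These are the groups numbered 28, 29, 30 among groups of order 243 in the GAP SmallGroups library.) *)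

theory Defs
  imports "HOL-Algebra.Algebra"
begin

definition comm :: "('a, 'b) monoid_scheme \<Rightarrow> 'a \<Rightarrow> 'a \<Rightarrow> 'a" where
  "comm G g h = inv\<^bsub>G\<^esub> g \<otimes>\<^bsub>G\<^esub> inv\<^bsub>G\<^esub> h \<otimes>\<^bsub>G\<^esub> g \<otimes>\<^bsub>G\<^esub> h"

definition center :: "('a, 'b) monoid_scheme \<Rightarrow> 'a set" where
  "center G = {z \<in> carrier G. \<forall>g \<in> carrier G. z \<otimes>\<^bsub>G\<^esub> g = g \<otimes>\<^bsub>G\<^esub> z}"

(* Bicyclic subgroup: cyclic, or internal direct product of two cyclic subgroups
   (the cyclic case is b = 1). *)
definition bicyclic :: "('a, 'b) monoid_scheme \<Rightarrow> 'a set \<Rightarrow> bool" where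
  "bicyclic G A \<longleftrightarrow> (\<exists>a \<in> carrier G. \<exists>b \<in> carrier G.
      a \<otimes>\<^bsub>G\<^esub> b = b \<otimes>\<^bsub>G\<^esub> a \<and>
      generate G {a} \<inter> generate G {b} = {\<one>\<^bsub>G\<^esub>} \<and>
      A = generate G {a} <#>\<^bsub>G\<^esub> generate G {b})"

(* 2-cochains with values in Q/Z are represented by rational-valued functions,
   taken modulo Z pointwise.  Trivial action on Q/Z. *)
definition cocycle2 :: "('a, 'b) monoid_scheme \<Rightarrow> ('a \<Rightarrow> 'a \<Rightarrow> rat) \<Rightarrow> bool" where
  "cocycle2 G c \<longleftrightarrow> (\<forall>g \<in> carrier G. \<forall>h \<in> carrier G. \<forall>k \<in> carrier G.
      c h k - c (g \<otimes>\<^bsub>G\<^esub> h) k + c g (h \<otimes>\<^bsub>G\<^esub> k) - c g h \<in> \<int>)"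

(* c restricted to the subgroup A is a coboundary (in Q/Z) on A, i.e. its class in
   H^2(A,Q/Z) is zero; with A = carrier G this says the class in H^2(G,Q/Z) is zero. *)
definition coboundary_on :: "('a, 'b) monoid_scheme \<Rightarrow> 'a set \<Rightarrow> ('a \<Rightarrow> 'a \<Rightarrow> rat) \<Rightarrow> bool" where
  "coboundary_on G A c \<longleftrightarrow> (\<exists>f :: 'a \<Rightarrow> rat. \<forall>g \<in> A. \<forall>h \<in> A.
      c g h - (f h - f (g \<otimes>\<^bsub>G\<^esub> h) + f g) \<in> \<int>)"

definition B0_nontrivial :: "('a, 'b) monoid_scheme \<Rightarrow> bool" where
  "B0_nontrivial G \<longleftrightarrow> (\<exists>c. cocycle2 G c \<and> \<not> coboundary_on G (carrier G) c \<and>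
      (\<forall>A. subgroup A G \<and> bicyclic G A \<longrightarrow> coboundary_on G A c))"

end

theory Submission
  imports Defs
begin

(* Writing f1^3 = f5^e with e = 0, 1, 2 in the cases (a), (b), (c), the three groups are treated
   uniformly (locale pc5).  The development has three parts.

   A coboundary gives every z arising in a
      commutator relation y x = x (y z) a value determined by the cocycle, so two such relations
      with different values show that a cocycle is not a coboundary.  For a normalized Z/n-valued
      cocycle T, the central extension of G by Z/n with factor set T shows that T/n is a coboundary
      on every bicyclic subgroup <a><b> with T(a,b) = T(b,a) mod n: the lifts of a, b and the
      central generator commute, and a potential is read off from exponents.  Collection shows that every element is f1^a1 ... f5^a5 with all a_i < 3 and
      computes products of such words; since |G| = 3^5 the exponent vector (coord) is unique.
   3. The cocycle Tpoly(a,b) = b1 C(a2,2) + b2 a3 + a2 b1 b2 on exponent vectors is a cocycle mod 3,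
      symmetric mod 3 on commuting pairs, and assigns the values 1/3 and 0 to the relations
      [f3,f2] = f5 and [f4,f1] = f5; hence B0(G) is nonzero.  The first two exponents define a
      homomorphism onto C3 x C3 with kernel generated by the commutators f3, f4, f5, which gives
      G/[G,G] = C3 x C3. *)

lemma (in group) commutator_rule:
  assumes x: "x \<in> carrier G" and y: "y \<in> carrier G" and xy: "comm G x y = z"
  shows "x \<otimes> y = y \<otimes> (x \<otimes> z)"
proof -
  have "y \<otimes> (x \<otimes> z) = y \<otimes> (x \<otimes> (inv x \<otimes> (inv y \<otimes> (x \<otimes> y))))"
    using x y xy by (simp add: comm_def m_assoc)
  also have "\<dots> = x \<otimes> y" using x y by (simp add: m_assoc[symmetric] r_inv)
  finally show ?thesis by simp
qed

lemma (in group) commutator_in_derived: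
  assumes "x \<in> carrier G" "y \<in> carrier G"
  shows "comm G x y \<in> derived G (carrier G)"
proof -
  have "comm G x y = inv x \<otimes> inv y \<otimes> inv (inv x) \<otimes> inv (inv y)"
    using assms by (simp add: comm_def)
  then have "comm G x y \<in> derived_set G (carrier G)" using assms by blast
  then show ?thesis unfolding derived_def by (rule generate.incl)
qed

lemma (in group) inv_eq_square_if_cube_one:
  assumes x: "x \<in> carrier G" and x3: "x [^] (3::nat) = \<one>"
  shows "inv x = x [^] (2::nat)"
proof -
  have "x [^] (2::nat) \<otimes> x = x [^] (3::nat)" using x by (simp add: numeral_3_eq_3 numeral_2_eq_2)
  then show ?thesis using x x3 by (metis inv_equality nat_pow_closed)
qed

lemma (in group) power_if_cube_root_case:
  assumes z: "z \<in> carrier G" and z3: "z [^] (3::nat) = \<one>" and y: "y = \<one> \<or> y = z \<or> y = inv z"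
  obtains e :: nat where "y = z [^] e"
proof -
  have "y = z [^] (0::nat) \<or> y = z [^] (1::nat) \<or> y = z [^] (2::nat)"
    using y z inv_eq_square_if_cube_one[OF z z3] by auto
  then show ?thesis using that by blast
qed

lemma (in group) subgroup_nat_pow_closed:
  "subgroup H G \<Longrightarrow> x \<in> H \<Longrightarrow> x [^] (n::nat) \<in> H"
  by (induction n) (auto simp: subgroup.one_closed subgroup.m_closed)

lemma (in group) pow_div_mod:
  assumes x: "x \<in> carrier G"
  shows "x [^] (m::nat) = x [^] (m mod k) \<otimes> (x [^] k) [^] (m div k)"
proof -
  have "x [^] m = x [^] (m mod k + k * (m div k))" by simp
  also have "\<dots> = x [^] (m mod k) \<otimes> (x [^] k) [^] (m div k)"
    using x by (simp add: nat_pow_mult nat_pow_pow)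
  finally show ?thesis .
qed

lemma (in group) pow_commute:
  assumes x: "x \<in> carrier G" and y: "y \<in> carrier G" and xy: "x \<otimes> y = y \<otimes> x"
  shows "x [^] (k::nat) \<otimes> y [^] (l::nat) = y [^] l \<otimes> x [^] k"
proof -
  have "y \<otimes> x [^] k = x [^] k \<otimes> y" using group_commutes_pow[OF xy x y] by simp
  then show ?thesis using group_commutes_pow[of y "x [^] k" l] x y by simp
qed

lemma (in group) pow_commutator_rule:
  assumes x: "x \<in> carrier G" and y: "y \<in> carrier G" and z: "z \<in> carrier G"
    and rel: "y \<otimes> x = x \<otimes> (y \<otimes> z)" and zy: "z \<otimes> y = y \<otimes> z"
  shows "y [^] (k::nat) \<otimes> x = x \<otimes> (y [^] k \<otimes> z [^] k)"
proof (induction k)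
  case 0 show ?case using x by simp
next
  case (Suc k)
  have zk: "z [^] k \<otimes> y = y \<otimes> z [^] k" using group_commutes_pow[OF zy z y] .
  have "y [^] Suc k \<otimes> x = y [^] k \<otimes> (y \<otimes> x)" using x y by (simp add: m_assoc)
  also have "\<dots> = (y [^] k \<otimes> x) \<otimes> (y \<otimes> z)" using x y z by (simp add: rel m_assoc)
  also have "\<dots> = x \<otimes> (y [^] k \<otimes> (z [^] k \<otimes> y) \<otimes> z)" using x y z Suc by (simp add: m_assoc)
  also have "\<dots> = x \<otimes> (y [^] Suc k \<otimes> z [^] Suc k)" using x y z by (simp add: zk m_assoc)
  finally show ?case .
qed

lemma (in group) commuting_monomials_mult:
  assumes x: "x \<in> carrier G" and y: "y \<in> carrier G" and t: "t \<in> carrier G"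
    and xy: "x \<otimes> y = y \<otimes> x" and xt: "x \<otimes> t = t \<otimes> x" and yt: "y \<otimes> t = t \<otimes> y"
  shows "x [^] (i::nat) \<otimes> y [^] (j::nat) \<otimes> t [^] (k::nat) \<otimes> (x [^] (p::nat) \<otimes> y [^] (q::nat) \<otimes> t [^] (r::nat))
       = x [^] (i+p) \<otimes> y [^] (j+q) \<otimes> t [^] (k+r)"
proof -
  have yx: "y [^] j \<otimes> x [^] p = x [^] p \<otimes> y [^] j" using pow_commute[OF y x] xy by simp
  have tx: "t [^] k \<otimes> x [^] p = x [^] p \<otimes> t [^] k" using pow_commute[OF t x] xt by simp
  have ty: "t [^] k \<otimes> y [^] q = y [^] q \<otimes> t [^] k" using pow_commute[OF t y] yt by simp
  have "x [^] i \<otimes> y [^] j \<otimes> t [^] k \<otimes> (x [^] p \<otimes> y [^] q \<otimes> t [^] r)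
      = x [^] i \<otimes> (y [^] j \<otimes> (t [^] k \<otimes> x [^] p) \<otimes> (y [^] q \<otimes> t [^] r))"
    using x y t by (simp add: m_assoc)
  also have "\<dots> = x [^] i \<otimes> ((y [^] j \<otimes> x [^] p) \<otimes> (t [^] k \<otimes> y [^] q) \<otimes> t [^] r)"
    using x y t by (simp add: tx m_assoc)
  also have "\<dots> = (x [^] i \<otimes> x [^] p) \<otimes> (y [^] j \<otimes> y [^] q) \<otimes> (t [^] k \<otimes> t [^] r)"
    using x y t by (simp add: yx ty m_assoc)
  also have "\<dots> = x [^] (i+p) \<otimes> y [^] (j+q) \<otimes> t [^] (k+r)"
    using x y t by (simp add: nat_pow_mult)
  finally show ?thesis .
qed

(* A coboundary F takes the same value (mod Z) on every element z produced by a commutator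
   relation y x = x (y z), namely a value determined by the cocycle alone. *)
lemma (in group) coboundary_commutator_value:
  assumes F: "\<And>g h. g \<in> carrier G \<Longrightarrow> h \<in> carrier G \<Longrightarrow> c g h - (F h - F (g \<otimes> h) + F g) \<in> \<int>"
    and x: "x \<in> carrier G" and y: "y \<in> carrier G" and z: "z \<in> carrier G"
    and rel: "y \<otimes> x = x \<otimes> (y \<otimes> z)"
  shows "F z + (c y x - c x (y \<otimes> z) - c y z) \<in> \<int>"
proof -
  have "(c x (y \<otimes> z) - (F (y \<otimes> z) - F (x \<otimes> (y \<otimes> z)) + F x))
      + (c y z - (F z - F (y \<otimes> z) + F y)) - (c y x - (F x - F (y \<otimes> x) + F y)) \<in> \<int>"
    using x y z by (intro Ints_diff Ints_add F) auto
  moreover have "(c x (y \<otimes> z) - (F (y \<otimes> z) - F (x \<otimes> (y \<otimes> z)) + F x))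
      + (c y z - (F z - F (y \<otimes> z) + F y)) - (c y x - (F x - F (y \<otimes> x) + F y))
      = - (F z + (c y x - c x (y \<otimes> z) - c y z))"
    using rel by (simp add: algebra_simps)
  ultimately show ?thesis by (metis minus_in_Ints_iff)
qed

lemma (in group) not_coboundary_by_commutators:
  assumes x1: "x1 \<in> carrier G" and y1: "y1 \<in> carrier G"
    and x2: "x2 \<in> carrier G" and y2: "y2 \<in> carrier G" and z: "z \<in> carrier G"
    and rel1: "y1 \<otimes> x1 = x1 \<otimes> (y1 \<otimes> z)" and rel2: "y2 \<otimes> x2 = x2 \<otimes> (y2 \<otimes> z)"
    and differ: "(c y1 x1 - c x1 (y1 \<otimes> z) - c y1 z) - (c y2 x2 - c x2 (y2 \<otimes> z) - c y2 z) \<notin> \<int>"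
  shows "\<not> coboundary_on G (carrier G) c"
proof
  assume "coboundary_on G (carrier G) c"
  then obtain F where F: "\<And>g h. g \<in> carrier G \<Longrightarrow> h \<in> carrier G \<Longrightarrow>
      c g h - (F h - F (g \<otimes> h) + F g) \<in> \<int>" unfolding coboundary_on_def by blast
  have "(F z + (c y1 x1 - c x1 (y1 \<otimes> z) - c y1 z)) - (F z + (c y2 x2 - c x2 (y2 \<otimes> z) - c y2 z)) \<in> \<int>"
    by (rule Ints_diff[OF coboundary_commutator_value[OF F x1 y1 z rel1]
                           coboundary_commutator_value[OF F x2 y2 z rel2]])
  with differ show False by (simp add: algebra_simps)
qed

lemma mod_eq_imp_diff_quotient_Ints:
  assumes "(x::nat) mod n = y mod n"
  shows "(of_nat x - of_nat y) / of_nat n \<in> (\<int> :: rat set)"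
proof -
  have "int x mod int n = int y mod int n" using assms by (metis of_nat_mod)
  then have "int n dvd int x - int y" by (simp add: mod_eq_dvd_iff)
  then obtain q where q: "int x - int y = int n * q" by blast
  then have "(of_nat x - of_nat y :: rat) = of_nat n * of_int q"
    by (metis of_int_diff of_int_mult of_int_of_nat_eq)
  then have "(of_nat x - of_nat y) / of_nat n = (if n = 0 then 0 else of_int q :: rat)" by simp
  then show ?thesis by simp
qed

(* The corresponding Q/Z-valued cochain is T/n; the central extension of G by Z/n defined by T
   is used to show that T/n restricts to coboundaries on bicyclic subgroups. *)
locale Zn_cocycle = group G for G (structure) +
  fixes n :: nat and T :: "'a \<Rightarrow> 'a \<Rightarrow> nat"
  assumes n_pos: "0 < n"
    and T_one_left [simp]: "g \<in> carrier G \<Longrightarrow> T \<one> g = 0"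
    and T_one_right [simp]: "g \<in> carrier G \<Longrightarrow> T g \<one> = 0"
    and T_cocycle: "\<lbrakk>g \<in> carrier G; h \<in> carrier G; k \<in> carrier G\<rbrakk> \<Longrightarrow>
        (T h k + T g (h \<otimes> k)) mod n = (T g h + T (g \<otimes> h) k) mod n"
begin

definition cochain :: "'a \<Rightarrow> 'a \<Rightarrow> rat" where
  "cochain g h = of_nat (T g h) / of_nat n"

lemma cochain_cocycle: "cocycle2 G cochain"
  unfolding cocycle2_def
proof (intro ballI)
  fix g h k assume g: "g \<in> carrier G" and h: "h \<in> carrier G" and k: "k \<in> carrier G"
  have "cochain h k - cochain (g \<otimes> h) k + cochain g (h \<otimes> k) - cochain g h =
     (of_nat (T h k + T g (h \<otimes> k)) - of_nat (T g h + T (g \<otimes> h) k)) / of_nat n"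
    unfolding cochain_def by (simp add: add_divide_distrib diff_divide_distrib algebra_simps)
  also have "\<dots> \<in> \<int>" by (rule mod_eq_imp_diff_quotient_Ints[OF T_cocycle[OF g h k]])
  finally show "cochain h k - cochain (g \<otimes> h) k + cochain g (h \<otimes> k) - cochain g h \<in> \<int>" .
qed

definition ext :: "('a \<times> nat) monoid" where
  "ext = \<lparr>carrier = carrier G \<times> {..<n},
          monoid.mult = (\<lambda>p q. (fst p \<otimes> fst q, (snd p + snd q + T (fst p) (fst q)) mod n)),
          one = (\<one>, 0)\<rparr>"

lemma ext_carrier [simp]: "carrier ext = carrier G \<times> {..<n}"
  and ext_mult [simp]: "p \<otimes>\<^bsub>ext\<^esub> q = (fst p \<otimes> fst q, (snd p + snd q + T (fst p) (fst q)) mod n)"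
  and ext_one [simp]: "\<one>\<^bsub>ext\<^esub> = (\<one>, 0)"
  by (simp_all add: ext_def)

(* Associativity of the extension reduces to the cocycle identity mod n. *)
lemma ext_assoc_arith:
  assumes "(T3 + T4) mod n = (T1 + T2) mod n"
  shows "((k + l + T1) mod n + m + T2) mod n = (k + (l + m + T3) mod n + T4) mod n"
proof -
  have "((k + l + T1) mod n + m + T2) mod n = ((k + l + T1) + m + T2) mod n"
    by (intro mod_add_cong) simp_all
  also have "\<dots> = ((k + l + m) + (T1 + T2)) mod n" by (simp add: algebra_simps)
  also have "\<dots> = ((k + l + m) + (T3 + T4)) mod n" by (rule mod_add_cong[OF refl assms[symmetric]])
  also have "\<dots> = (k + (l + m + T3) + T4) mod n" by (simp add: algebra_simps)
  also have "\<dots> = (k + (l + m + T3) mod n + T4) mod n" by (intro mod_add_cong) simp_all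
  finally show ?thesis .
qed

lemma ext_group: "group ext"
proof (rule groupI)
  fix p q assume "p \<in> carrier ext" "q \<in> carrier ext"
  then show "p \<otimes>\<^bsub>ext\<^esub> q \<in> carrier ext" using n_pos by auto
next
  show "\<one>\<^bsub>ext\<^esub> \<in> carrier ext" using n_pos by simp
next
  fix p q r assume "p \<in> carrier ext" "q \<in> carrier ext" "r \<in> carrier ext"
  then obtain g k h l m s where pqr: "p = (g, k)" "q = (h, l)" "r = (m, s)"
    and gs: "g \<in> carrier G" "h \<in> carrier G" "m \<in> carrier G" by auto
  have "((k + l + T g h) mod n + s + T (g \<otimes> h) m) mod n
      = (k + (l + s + T h m) mod n + T g (h \<otimes> m)) mod n"
    by (rule ext_assoc_arith[OF T_cocycle[OF gs]])
  then show "p \<otimes>\<^bsub>ext\<^esub> q \<otimes>\<^bsub>ext\<^esub> r = p \<otimes>\<^bsub>ext\<^esub> (q \<otimes>\<^bsub>ext\<^esub> r)"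
    using pqr gs by (simp add: m_assoc)
next
  fix p assume "p \<in> carrier ext"
  then obtain g k where p: "p = (g, k)" "g \<in> carrier G" "k < n" by auto
  show "\<one>\<^bsub>ext\<^esub> \<otimes>\<^bsub>ext\<^esub> p = p" using p by simp
  define u where "u = (k + T (inv g) g) mod n"
  have "(inv g, (n - u) mod n) \<otimes>\<^bsub>ext\<^esub> p = \<one>\<^bsub>ext\<^esub>"
  proof -
    have "u < n" using n_pos by (simp add: u_def)
    have "((n - u) mod n + k + T (inv g) g) mod n = ((n - u) + (k + T (inv g) g)) mod n"
      by (simp add: add.assoc mod_add_left_eq)
    also have "\<dots> = ((n - u) + u) mod n" unfolding u_def by (simp add: mod_add_right_eq)
    also have "\<dots> = 0" using \<open>u < n\<close> by simp
    finally show ?thesis using p by simp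
  qed
  moreover have "(inv g, (n - u) mod n) \<in> carrier ext" using p n_pos by simp
  ultimately show "\<exists>q\<in>carrier ext. q \<otimes>\<^bsub>ext\<^esub> p = \<one>\<^bsub>ext\<^esub>" by blast
qed

sublocale E: group ext by (rule ext_group)

definition tau :: "'a \<times> nat" where "tau = (\<one>, 1 mod n)"

lemma tau_closed: "tau \<in> carrier ext"
  using n_pos by (simp add: tau_def)

lemma tau_pow: "tau [^]\<^bsub>ext\<^esub> (k::nat) = (\<one>, k mod n)"
proof (induction k)
  case (Suc k)
  have "tau [^]\<^bsub>ext\<^esub> Suc k = (\<one>, k mod n) \<otimes>\<^bsub>ext\<^esub> tau"
    by (simp only: E.nat_pow_Suc Suc)
  also have "\<dots> = (\<one>, Suc k mod n)" by (simp add: tau_def mod_add_eq mod_Suc_eq)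
  finally show ?case .
qed simp

lemma tau_order: "tau [^]\<^bsub>ext\<^esub> n = \<one>\<^bsub>ext\<^esub>"
  by (simp add: tau_pow)

lemma tau_central: "p \<in> carrier ext \<Longrightarrow> tau \<otimes>\<^bsub>ext\<^esub> p = p \<otimes>\<^bsub>ext\<^esub> tau"
  by (auto simp: tau_def add_ac)

lemma fst_ext_pow: "p \<in> carrier ext \<Longrightarrow> fst (p [^]\<^bsub>ext\<^esub> (k::nat)) = fst p [^] k"
  by (induction k) auto

lemma lift_mult:
  assumes "g \<in> carrier G" "h \<in> carrier G"
  shows "(g, 0) \<otimes>\<^bsub>ext\<^esub> (h, 0) = (g \<otimes> h, 0) \<otimes>\<^bsub>ext\<^esub> tau [^]\<^bsub>ext\<^esub> T g h"
  using assms by (simp add: tau_pow)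

lemma lift_commute:
  assumes "g \<otimes> h = h \<otimes> g" and "T g h mod n = T h g mod n"
  shows "(g, 0) \<otimes>\<^bsub>ext\<^esub> (h, 0) = (h, 0) \<otimes>\<^bsub>ext\<^esub> (g, 0)"
  using assms by simp

end

(* Then the lifts (a,0), (b,0) and tau commute pairwise,
   so the preimage of <a><b> in the extension consists of the monomials
   word i j k = (a,0)^i (b,0)^j tau^k, and a coboundary for T/n on <a><b> is obtained from the
   Q-valued "weight" of these monomials. *)
locale Zn_cocycle_pair = Zn_cocycle +
  fixes a b :: 'a
  assumes fin: "finite (carrier G)"
    and a: "a \<in> carrier G" and b: "b \<in> carrier G" and ab: "a \<otimes> b = b \<otimes> a"
    and T_sym: "T a b mod n = T b a mod n"
    and disjoint: "generate G {a} \<inter> generate G {b} = {\<one>}"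
begin

definition word :: "nat \<Rightarrow> nat \<Rightarrow> nat \<Rightarrow> 'a \<times> nat" where
  "word i j k = (a, 0) [^]\<^bsub>ext\<^esub> i \<otimes>\<^bsub>ext\<^esub> (b, 0) [^]\<^bsub>ext\<^esub> j \<otimes>\<^bsub>ext\<^esub> tau [^]\<^bsub>ext\<^esub> k"

lemma lift_a: "(a, 0) \<in> carrier ext" and lift_b: "(b, 0) \<in> carrier ext"
  using a b n_pos by simp_all

lemma word_closed: "word i j k \<in> carrier ext"
  unfolding word_def using lift_a lift_b tau_closed by blast

lemma word_mult: "word i j k \<otimes>\<^bsub>ext\<^esub> word p q r = word (i + p) (j + q) (k + r)"
  unfolding word_def
  by (rule E.commuting_monomials_mult[OF lift_a lift_b tau_closed lift_commute[OF ab T_sym]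
        tau_central[OF lift_a, symmetric] tau_central[OF lift_b, symmetric]])

lemma fst_word: "fst (word i j k) = a [^] i \<otimes> b [^] j"
  unfolding word_def using lift_a lift_b tau_closed by (simp add: fst_ext_pow tau_pow)

lemma word_tau: "word 0 0 k = tau [^]\<^bsub>ext\<^esub> k"
  unfolding word_def using tau_closed by (simp del: ext_carrier ext_mult ext_one)

definition ra :: nat where "ra = snd ((a, 0) [^]\<^bsub>ext\<^esub> ord a)"
definition rb :: nat where "rb = snd ((b, 0) [^]\<^bsub>ext\<^esub> ord b)"

lemma lift_pow_ord:
  assumes "x \<in> carrier G"
  shows "(x, 0) [^]\<^bsub>ext\<^esub> ord x = tau [^]\<^bsub>ext\<^esub> snd ((x, 0) [^]\<^bsub>ext\<^esub> ord x)"
proof -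
  have "(x, 0) [^]\<^bsub>ext\<^esub> ord x \<in> carrier ext" using assms n_pos by (intro E.nat_pow_closed) simp
  moreover have "fst ((x, 0) [^]\<^bsub>ext\<^esub> ord x) = \<one>"
    using assms n_pos by (simp add: fst_ext_pow)
  ultimately show ?thesis by (auto simp: tau_pow prod_eq_iff)
qed

(* The weight of a monomial: a Q-valued homomorphism on exponents, normalized so that
   (a,0)^(ord a), (b,0)^(ord b) and tau get weights ra/n, rb/n and 1/n. *)
definition weight :: "nat \<Rightarrow> nat \<Rightarrow> nat \<Rightarrow> rat" where
  "weight i j k = of_nat i * of_nat ra / (of_nat n * of_nat (ord a))
                + of_nat j * of_nat rb / (of_nat n * of_nat (ord b)) + of_nat k / of_nat n"

lemma weight_add: "weight (i + p) (j + q) (k + r) = weight i j k + weight p q r"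
  unfolding weight_def by (simp add: algebra_simps add_divide_distrib)

(* Monomials equal to the identity have integral weight; this uses the trivial intersection
   of <a> and <b>. *)
lemma weight_Ints_if_one:
  assumes one: "word i j k = \<one>\<^bsub>ext\<^esub>"
  shows "weight i j k \<in> \<int>"
proof -
  have ab1: "a [^] i \<otimes> b [^] j = \<one>" using fst_word[of i j k] one by simp
  have "a [^] i \<in> generate G {a}" using generate_pow_on_finite_carrier[OF fin a] by blast
  moreover have "a [^] i = inv (b [^] j)" using inv_equality[OF ab1] a b by simp
  moreover have "inv (b [^] j) \<in> generate G {b}"
    using generate_pow_on_finite_carrier[OF fin b] subgroup.m_inv_closed[OF generate_is_subgroup] b
    by blast
  ultimately have "a [^] i = \<one>" using disjoint by auto
  moreover from this have "b [^] j = \<one>" using ab1 a b by simp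
  ultimately have "ord a dvd i" "ord b dvd j" using pow_eq_id a b by auto
  then obtain i' j' where i': "i = ord a * i'" and j': "j = ord b * j'" by blast
  have ai': "(a, 0) [^]\<^bsub>ext\<^esub> (ord a * i') = tau [^]\<^bsub>ext\<^esub> (ra * i')"
    by (simp add: E.nat_pow_pow[OF lift_a, symmetric] lift_pow_ord[OF a, folded ra_def]
        E.nat_pow_pow[OF tau_closed])
  have bj': "(b, 0) [^]\<^bsub>ext\<^esub> (ord b * j') = tau [^]\<^bsub>ext\<^esub> (rb * j')"
    by (simp add: E.nat_pow_pow[OF lift_b, symmetric] lift_pow_ord[OF b, folded rb_def]
        E.nat_pow_pow[OF tau_closed])
  have "word i j k = tau [^]\<^bsub>ext\<^esub> (ra * i' + rb * j' + k)"
    unfolding word_def i' j' ai' bj' using tau_closed by (simp del: ext_mult add: E.nat_pow_mult)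
  then have "(ra * i' + rb * j' + k) mod n = 0" using one by (simp add: tau_pow)
  then obtain q where q: "ra * i' + rb * j' + k = n * q" by blast
  have "ord a \<ge> 1" "ord b \<ge> 1" using ord_ge_1 fin a b by auto
  moreover have "rat_of_nat n \<noteq> 0" using n_pos by simp
  ultimately have "weight i j k = of_nat (ra * i' + rb * j' + k) / of_nat n"
    unfolding weight_def i' j' by (simp add: field_simps)
  also have "\<dots> = of_nat q" using q n_pos by simp
  finally show ?thesis by simp
qed

(* Equal monomials have weights differing by an integer: multiplying both by the same monomial
   gives, on one side, a power of the identity ((a,0)^N)^i' ((b,0)^M)^j' (tau^n)^k', where N and M
   are the orders of the lifts. *)
lemma weight_diff_Ints:
  assumes eq: "word i j k = word i' j' k'"
  shows "weight i j k - weight i' j' k' \<in> \<int>"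
proof -
  define N where "N = E.ord (a, 0)"
  define M where "M = E.ord (b, 0)"
  have finE: "finite (carrier ext)" using fin by simp
  have "N \<ge> 1" and "M \<ge> 1"
    unfolding N_def M_def using E.ord_ge_1[OF finE] lift_a lift_b by auto
  then have exp_split: "N * i' = i' + (N - 1) * i'" "M * j' = j' + (M - 1) * j'" "n * k' = k' + (n - 1) * k'"
    using n_pos by (simp_all add: algebra_simps)
  have one: "word (N * i') (M * j') (n * k') = \<one>\<^bsub>ext\<^esub>"
    unfolding word_def N_def M_def using lift_a lift_b tau_closed
    by (simp del: ext_carrier ext_mult ext_one add: E.nat_pow_pow[symmetric] E.pow_ord_eq_1 tau_order)
  let ?R = "word ((N - 1) * i') ((M - 1) * j') ((n - 1) * k')"
  have "word (i + (N - 1) * i') (j + (M - 1) * j') (k + (n - 1) * k') = word i j k \<otimes>\<^bsub>ext\<^esub> ?R"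
    by (simp del: ext_mult add: word_mult)
  also have "\<dots> = word i' j' k' \<otimes>\<^bsub>ext\<^esub> ?R" by (simp only: eq)
  also have "\<dots> = word (N * i') (M * j') (n * k')" by (simp del: ext_mult add: word_mult exp_split)
  also have "\<dots> = \<one>\<^bsub>ext\<^esub>" by (rule one)
  finally have "weight (i + (N - 1) * i') (j + (M - 1) * j') (k + (n - 1) * k') \<in> \<int>"
    by (rule weight_Ints_if_one)
  moreover have "weight (N * i') (M * j') (n * k') \<in> \<int>" using one by (rule weight_Ints_if_one)
  ultimately have "weight (i + (N - 1) * i') (j + (M - 1) * j') (k + (n - 1) * k')
      - weight (N * i') (M * j') (n * k') \<in> \<int>" by (rule Ints_diff)
  also have "weight (i + (N - 1) * i') (j + (M - 1) * j') (k + (n - 1) * k')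
      - weight (N * i') (M * j') (n * k') = weight i j k - weight i' j' k'"
    by (simp only: exp_split weight_add)
  finally show ?thesis .
qed

lemma lift_is_word:
  assumes g: "g \<in> generate G {a} <#> generate G {b}"
  shows "\<exists>i j k. (g, 0) = word i j k"
proof -
  obtain p q where p: "p \<in> generate G {a}" and q: "q \<in> generate G {b}" and "g = p \<otimes> q"
    using g unfolding set_mult_def by blast
  moreover obtain i :: nat where "p = a [^] i" using p generate_pow_on_finite_carrier[OF fin a] by blast
  moreover obtain j :: nat where "q = b [^] j" using q generate_pow_on_finite_carrier[OF fin b] by blast
  ultimately have g_eq: "g = a [^] i \<otimes> b [^] j" by simp
  define s where "s = snd (word i j 0)"
  have s: "s < n" using word_closed[of i j 0] unfolding s_def by auto
  have "word i j (n - s) = word i j 0 \<otimes>\<^bsub>ext\<^esub> word 0 0 (n - s)"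
    by (simp del: ext_mult add: word_mult)
  also have "\<dots> = (g, 0)"
    using s a b unfolding word_tau s_def
    by (simp add: tau_pow prod_eq_iff fst_word g_eq mod_simps)
  finally show ?thesis by metis
qed

definition potential :: "'a \<Rightarrow> rat" where
  "potential g = (SOME v. \<exists>i j k. (g, 0) = word i j k \<and> v = weight i j k)"

lemma potential_word:
  assumes "(g, 0) = word i j k"
  shows "potential g - weight i j k \<in> \<int>"
proof -
  have "\<exists>v. \<exists>i' j' k'. (g, 0) = word i' j' k' \<and> v = weight i' j' k'" using assms by blast
  then have "\<exists>i' j' k'. (g, 0) = word i' j' k' \<and> potential g = weight i' j' k'"
    unfolding potential_def by (rule someI_ex)
  then obtain i' j' k' where "(g, 0) = word i' j' k'" "potential g = weight i' j' k'" by blast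
  then show ?thesis using weight_diff_Ints[of i' j' k' i j k] assms by simp
qed

(* The coboundary of the potential is T/n on <a><b>: comparing monomials for (g,0), (h,0) and
   (g h,0) through lift_mult. *)
lemma coboundary_on_product:
  assumes sub: "subgroup (generate G {a} <#> generate G {b}) G"
  shows "coboundary_on G (generate G {a} <#> generate G {b}) cochain"
  unfolding coboundary_on_def
proof (intro exI ballI)
  fix g h assume g: "g \<in> generate G {a} <#> generate G {b}" and h: "h \<in> generate G {a} <#> generate G {b}"
  have gc: "g \<in> carrier G" and hc: "h \<in> carrier G" using g h subgroup.subset[OF sub] by auto
  obtain i j k where wg: "(g, 0) = word i j k" using lift_is_word[OF g] by blast
  obtain p q r where wh: "(h, 0) = word p q r" using lift_is_word[OF h] by blast
  obtain u v w where wgh: "(g \<otimes> h, 0) = word u v w"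
    using lift_is_word[OF subgroup.m_closed[OF sub g h]] by blast
  have "word (i + p) (j + q) (k + r) = (g, 0) \<otimes>\<^bsub>ext\<^esub> (h, 0)"
    by (simp del: ext_mult add: wg wh word_mult)
  also have "\<dots> = word u v w \<otimes>\<^bsub>ext\<^esub> word 0 0 (T g h)"
    by (simp del: ext_mult add: lift_mult[OF gc hc] wgh word_tau)
  also have "\<dots> = word u v (w + T g h)" by (simp del: ext_mult add: word_mult)
  finally have "weight (i + p) (j + q) (k + r) - weight u v (w + T g h) \<in> \<int>"
    by (rule weight_diff_Ints)
  then have "(potential (g \<otimes> h) - weight u v w) - (potential g - weight i j k)
      - (potential h - weight p q r) - (weight (i + p) (j + q) (k + r) - weight u v (w + T g h)) \<in> \<int>"
    by (rule Ints_diff[OF Ints_diff[OF Ints_diff[OF potential_word[OF wgh] potential_word[OF wg]]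
                           potential_word[OF wh]]])
  also have "(potential (g \<otimes> h) - weight u v w) - (potential g - weight i j k)
      - (potential h - weight p q r) - (weight (i + p) (j + q) (k + r) - weight u v (w + T g h))
      = cochain g h - (potential h - potential (g \<otimes> h) + potential g)"
    by (simp add: weight_add cochain_def weight_def algebra_simps add_divide_distrib)
  finally show "cochain g h - (potential h - potential (g \<otimes> h) + potential g) \<in> \<int>" .
qed

end

theorem (in Zn_cocycle) B0_nontrivial_criterion:
  assumes fin: "finite (carrier G)"
    and sym: "\<And>g h. g \<in> carrier G \<Longrightarrow> h \<in> carrier G \<Longrightarrow> g \<otimes> h = h \<otimes> g \<Longrightarrow>
                  T g h mod n = T h g mod n"
    and not_cob: "\<not> coboundary_on G (carrier G) cochain"
  shows "B0_nontrivial G"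
  unfolding B0_nontrivial_def
proof (intro exI conjI allI impI)
  show "cocycle2 G cochain" by (rule cochain_cocycle)
  show "\<not> coboundary_on G (carrier G) cochain" by (rule not_cob)
  fix A assume "subgroup A G \<and> bicyclic G A"
  then obtain a b where A: "subgroup A G" "A = generate G {a} <#> generate G {b}"
    and pair: "a \<in> carrier G" "b \<in> carrier G" "a \<otimes> b = b \<otimes> a"
      "generate G {a} \<inter> generate G {b} = {\<one>}"
    unfolding bicyclic_def by blast
  interpret P: Zn_cocycle_pair G n T a b
    by (intro Zn_cocycle_pair.intro Zn_cocycle_axioms Zn_cocycle_pair_axioms.intro
        Zn_cocycle.intro is_group fin pair sym)
  show "coboundary_on G A cochain" using P.coboundary_on_product A by simp
qed

(* Exponent vectors (a1,...,a5) stand for the words f1^a1 f2^a2 f3^a3 f4^a4 f5^a5.  raw_prod is the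
   product given by the collection formulas, with unreduced exponents; reduce_exps brings a vector
   into the range Exps of normal forms using the power relations, and exp_prod combines the two. *)

type_synonym exps = "nat \<times> nat \<times> nat \<times> nat \<times> nat"

fun raw_prod :: "exps \<Rightarrow> exps \<Rightarrow> exps" where
  "raw_prod (a1,a2,a3,a4,a5) (b1,b2,b3,b4,b5) = ((a1+b1), (a2+b2), (a3 + b1*a2 + b3),
   (a4 + b1*a3 + (b1 choose 2)*a2 + b4),
   (a5 + b1*a4 + (b1 choose 2)*a3 + (b1 choose 3)*a2 + b1*(a2 choose 2) + b2*(a3 + b1*a2) + b5))"

fun reduce_exps :: "nat \<Rightarrow> exps \<Rightarrow> exps" where
  "reduce_exps e (a1,a2,a3,a4,a5) = (a1 mod 3, a2 mod 3, a3 mod 3, (a4 + 2*(a2 div 3)) mod 3,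
     (a5 + e*(a1 div 3) + 2*(a3 div 3)) mod 3)"

definition exp_prod :: "nat \<Rightarrow> exps \<Rightarrow> exps \<Rightarrow> exps" where "exp_prod e a b = reduce_exps e (raw_prod a b)"

fun Tpoly :: "exps \<Rightarrow> exps \<Rightarrow> nat" where
  "Tpoly (a1,a2,a3,a4,a5) (b1,b2,b3,b4,b5) = b1*(a2 choose 2) + b2*a3 + a2*b1*b2"

definition Exps :: "exps set" where "Exps = {0..<3} \<times> {0..<3} \<times> {0..<3} \<times> {0..<3} \<times> {0..<3}"

lemma finite_Exps: "finite Exps" by (simp add: Exps_def)
lemma card_Exps: "card Exps = 243" by (simp add: Exps_def card_cartesian_product)

lemma exp_prod_in_Exps: "exp_prod e a b \<in> Exps"
  by (cases a; cases b) (simp add: exp_prod_def Exps_def)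

lemma less3_cases: "(a::nat) < 3 \<longleftrightarrow> a = 0 \<or> a = 1 \<or> a = 2" by auto

lemma mod_add_cancel: "(x + s) mod (n::nat) = (y + s) mod n \<Longrightarrow> x mod n = y mod n"
  by (simp add: nat_mod_eq_iff)

lemma choose2_Suc: "Suc k choose 2 = k + (k choose 2)" by (simp add: numeral_2_eq_2)
lemma choose3_Suc: "Suc k choose 3 = (k choose 2) + (k choose 3)"
  by (simp add: numeral_3_eq_3 numeral_2_eq_2)

lemma choose2_add: "(m + n) choose 2 = (m choose 2) + (n choose 2) + m*n"
  by (induction n) (simp_all add: choose2_Suc algebra_simps)

lemma choose2_small: "x < 3 \<Longrightarrow> x choose 2 = (if x = 2 then 1 else 0)"
  by (auto simp: less3_cases numeral_2_eq_2)

lemma choose3_small: "x < 3 \<Longrightarrow> x choose 3 = 0"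
  by (simp add: binomial_eq_0)

lemma choose2_mod3: "((x::nat) choose 2) mod 3 = (if x mod 3 = 2 then 1 else 0)"
proof (induction x rule: less_induct)
  case (less x)
  show ?case
  proof (cases "x < 3")
    case True then show ?thesis by (simp add: choose2_small)
  next
    case False
    then obtain y where y: "x = y + 3" by (metis add.commute le_add_diff_inverse not_less)
    have "x choose 2 = (y choose 2) + 3 * (y + 1)" unfolding y choose2_add
      by (simp add: numeral_3_eq_3 numeral_2_eq_2)
    then have "(x choose 2) mod 3 = ((y choose 2) + 3 * (y + 1)) mod 3" by (simp only:)
    also have "\<dots> = (y choose 2) mod 3" by (rule mod_mult_self2)
    also have "\<dots> = (if y mod 3 = 2 then 1 else 0)" using less y by simp
    finally show ?thesis using y by simp
  qed
qed

lemma Tpoly_raw_cocycle: "Tpoly a b + Tpoly (raw_prod a b) c = Tpoly b c + Tpoly a (raw_prod b c)"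
  by (cases a; cases b; cases c) (simp add: choose2_add algebra_simps)

lemma choose2_mod_mod: "((x mod 3) choose 2) mod 3 = (x choose 2) mod 3"
  by (simp add: choose2_mod3)

lemma Tpoly_reduce_left: "Tpoly (reduce_exps e x) c mod 3 = Tpoly x c mod 3"
proof (cases x; cases c)
  fix x1 x2 x3 x4 x5 c1 c2 c3 c4 c5
  assume xs: "x = (x1,x2,x3,x4,x5)" and cs: "c = (c1,c2,c3,c4,c5)"
  have "Tpoly (reduce_exps e x) c mod 3 = (c1 * (x2 mod 3 choose 2) + c2 * (x3 mod 3) + (x2 mod 3) * c1 * c2) mod 3"
    using xs cs by simp
  also have "\<dots> = (c1 * (x2 choose 2) + c2 * x3 + x2 * c1 * c2) mod 3"
    by (intro mod_add_cong mod_mult_cong; simp add: choose2_mod_mod)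
  also have "\<dots> = Tpoly x c mod 3" using xs cs by simp
  finally show ?thesis .
qed

lemma Tpoly_reduce_right: "Tpoly a (reduce_exps e y) mod 3 = Tpoly a y mod 3"
proof (cases a; cases y)
  fix x1 x2 x3 x4 x5 c1 c2 c3 c4 c5
  assume xs: "a = (x1,x2,x3,x4,x5)" and cs: "y = (c1,c2,c3,c4,c5)"
  have "Tpoly a (reduce_exps e y) mod 3 = ((c1 mod 3) * (x2 choose 2) + (c2 mod 3) * x3 + x2 * (c1 mod 3) * (c2 mod 3)) mod 3"
    using xs cs by simp
  also have "\<dots> = (c1 * (x2 choose 2) + c2 * x3 + x2 * c1 * c2) mod 3"
    by (intro mod_add_cong mod_mult_cong; simp)
  also have "\<dots> = Tpoly a y mod 3" using xs cs by simp
  finally show ?thesis .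
qed

lemma Tpoly_cocycle: "(Tpoly b c + Tpoly a (exp_prod e b c)) mod 3 = (Tpoly a b + Tpoly (exp_prod e a b) c) mod 3"
proof -
  have "(Tpoly b c + Tpoly a (exp_prod e b c)) mod 3 = (Tpoly b c + Tpoly a (raw_prod b c)) mod 3"
    unfolding exp_prod_def using Tpoly_reduce_right[of a e "raw_prod b c"] by (metis mod_add_right_eq)
  also have "\<dots> = (Tpoly a b + Tpoly (raw_prod a b) c) mod 3" by (simp add: Tpoly_raw_cocycle)
  also have "\<dots> = (Tpoly a b + Tpoly (exp_prod e a b) c) mod 3"
    unfolding exp_prod_def using Tpoly_reduce_left[of e "raw_prod a b" c] by (metis mod_add_right_eq)
  finally show ?thesis .
qed

(* The finite check behind Tpoly_commuting: digits below 3 satisfying the congruences that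
   express commutation in coordinates 3 and 4 have symmetric Tpoly mod 3. *)
lemma Tpoly_swap_table: "(a1::nat)<3 \<Longrightarrow> (a2::nat)<3 \<Longrightarrow> (a3::nat)<3 \<Longrightarrow> (b1::nat)<3 \<Longrightarrow> (b2::nat)<3 \<Longrightarrow> (b3::nat)<3 \<Longrightarrow>
 a1 \<noteq> 0 \<or> b1 \<noteq> 0 \<Longrightarrow>
 (b1*a2) mod 3 = (a1*b2) mod 3 \<Longrightarrow>
 (b1*a3 + (if b1 = 2 then 1 else 0)*a2) mod 3 = (a1*b3 + (if a1 = 2 then 1 else 0)*b2) mod 3 \<Longrightarrow>
 (b1*(if a2 = 2 then 1 else 0) + b2*a3 + a2*b1*b2) mod 3 = (a1*(if b2 = 2 then 1 else 0) + a2*b3 + b2*a1*a2) mod 3"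
  unfolding less3_cases by (elim disjE; simp)

lemma Tpoly_commuting: assumes "a \<in> Exps" "b \<in> Exps" "exp_prod e a b = exp_prod e b a"
  shows "Tpoly a b mod 3 = Tpoly b a mod 3"
proof (cases a; cases b)
  fix a1 a2 a3 a4 a5 b1 b2 b3 b4 b5
  assume as: "a = (a1,a2,a3,a4,a5)" and bs: "b = (b1,b2,b3,b4,b5)"
  have lt: "a1 < 3" "a2 < 3" "a3 < 3" "a4 < 3" "a5 < 3" "b1 < 3" "b2 < 3" "b3 < 3" "b4 < 3" "b5 < 3"
    using assms(1,2) as bs by (auto simp: Exps_def)
  have e3: "(a3 + b1*a2 + b3) mod 3 = (b3 + a1*b2 + a3) mod 3"
   and e4: "(a4 + b1*a3 + (b1 choose 2)*a2 + b4 + 2*((a2+b2) div 3)) mod 3 = (b4 + a1*b3 + (a1 choose 2)*b2 + a4 + 2*((a2+b2) div 3)) mod 3"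
   and e5: "(a5 + b1*a4 + (b1 choose 2)*a3 + (b1 choose 3)*a2 + b1*(a2 choose 2) + b2*(a3 + b1*a2) + b5 + e*((a1+b1) div 3) + 2*((a3 + b1*a2 + b3) div 3)) mod 3
      = (b5 + a1*b4 + (a1 choose 2)*b3 + (a1 choose 3)*b2 + a1*(b2 choose 2) + a2*(b3 + a1*b2) + a5 + e*((a1+b1) div 3) + 2*((b3 + a1*b2 + a3) div 3)) mod 3"
    using assms(3) as bs by (simp_all add: exp_prod_def add.commute)
  have H3: "(b1*a2) mod 3 = (a1*b2) mod 3"
    using e3 mod_add_cancel[of "b1*a2" "a3+b3" 3 "a1*b2"] by (simp add: algebra_simps)
  have H4: "(b1*a3 + (if b1 = 2 then 1 else 0)*a2) mod 3 = (a1*b3 + (if a1 = 2 then 1 else 0)*b2) mod 3"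
    using e4 mod_add_cancel[of "b1*a3 + (b1 choose 2)*a2" "a4 + b4 + 2*((a2+b2) div 3)" 3 "a1*b3 + (a1 choose 2)*b2"]
    lt by (simp add: algebra_simps choose2_small)
  show ?thesis
  proof (cases "a1 \<noteq> 0 \<or> b1 \<noteq> 0")
    case True
    have "(b1*(if a2 = 2 then 1 else 0) + b2*a3 + a2*b1*b2) mod 3 = (a1*(if b2 = 2 then 1 else 0) + a2*b3 + b2*a1*a2) mod 3"
      using Tpoly_swap_table[OF lt(1,2,3,6,7,8) True H3 H4] .
    then show ?thesis using as bs lt by (simp add: choose2_small)
  next
    case False
    then have z: "a1 = 0" "b1 = 0" by auto
    have "(b2*a3 + (a5 + b5 + 2*((a3 + b3) div 3))) mod 3 = (a2*b3 + (a5 + b5 + 2*((a3 + b3) div 3))) mod 3"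
      using e5 z by (simp add: algebra_simps choose2_small choose3_small)
    then have "(b2*a3) mod 3 = (a2*b3) mod 3" by (rule mod_add_cancel)
    then show ?thesis using as bs z by simp
  qed
qed

lemma Tpoly_zero_left: "Tpoly (0,0,0,0,0) b = 0" by (cases b) simp
lemma Tpoly_zero_right: "Tpoly a (0,0,0,0,0) = 0" by (cases a) simp

(* The groups of the theorem: generators f1, ..., f5 with the commutator relations, f5 central, and
   power relations in which f1^3 = f5^e covers the three cases. *)
locale pc5 = group G for G (structure) +
  fixes f1 f2 f3 f4 f5 :: 'a and e :: nat
  assumes f1_in: "f1 \<in> carrier G" and f2_in: "f2 \<in> carrier G" and f3_in: "f3 \<in> carrier G"
    and f4_in: "f4 \<in> carrier G" and f5_in: "f5 \<in> carrier G"
    and comm21: "comm G f2 f1 = f3" and comm31: "comm G f3 f1 = f4" and comm41: "comm G f4 f1 = f5"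
    and comm32: "comm G f3 f2 = f5" and comm42: "comm G f4 f2 = \<one>" and comm43: "comm G f4 f3 = \<one>"
    and central5: "f5 \<in> center G"
    and pow1: "f1 [^] (3::nat) = f5 [^] e" and pow2: "f2 [^] (3::nat) = inv f4"
    and pow3: "f3 [^] (3::nat) = inv f5" and pow4: "f4 [^] (3::nat) = \<one>" and pow5: "f5 [^] (3::nat) = \<one>"
begin

lemmas f_in = f1_in f2_in f3_in f4_in f5_in

lemma rel21: "f2 \<otimes> f1 = f1 \<otimes> (f2 \<otimes> f3)" using commutator_rule[OF f2_in f1_in comm21] .
lemma rel31: "f3 \<otimes> f1 = f1 \<otimes> (f3 \<otimes> f4)" using commutator_rule[OF f3_in f1_in comm31] .
lemma rel41: "f4 \<otimes> f1 = f1 \<otimes> (f4 \<otimes> f5)" using commutator_rule[OF f4_in f1_in comm41] .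
lemma rel32: "f3 \<otimes> f2 = f2 \<otimes> (f3 \<otimes> f5)" using commutator_rule[OF f3_in f2_in comm32] .
lemma rel42: "f4 \<otimes> f2 = f2 \<otimes> f4" using commutator_rule[OF f4_in f2_in comm42] f_in by simp
lemma rel43: "f4 \<otimes> f3 = f3 \<otimes> f4" using commutator_rule[OF f4_in f3_in comm43] f_in by simp

lemma f5_central: "x \<in> carrier G \<Longrightarrow> f5 \<otimes> x = x \<otimes> f5"
  using central5 unfolding center_def by auto

lemma pow2_sq: "f2 [^] (3::nat) = f4 [^] (2::nat)"
  using pow2 inv_eq_square_if_cube_one[OF f4_in pow4] by simp
lemma pow3_sq: "f3 [^] (3::nat) = f5 [^] (2::nat)"
  using pow3 inv_eq_square_if_cube_one[OF f5_in pow5] by simp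

lemma f5_pow_central: "x \<in> carrier G \<Longrightarrow> f5 [^] (k::nat) \<otimes> x = x \<otimes> f5 [^] k"
  using group_commutes_pow f5_central f5_in by blast

lemma f5_pow_central_right: "x \<in> carrier G \<Longrightarrow> r \<in> carrier G \<Longrightarrow> f5 [^] (k::nat) \<otimes> (x \<otimes> r) = x \<otimes> (f5 [^] k \<otimes> r)"
  using f5_pow_central by (metis m_assoc nat_pow_closed f5_in)

lemma f5_pow_add: "f5 [^] (k::nat) \<otimes> f5 [^] (l::nat) = f5 [^] (k + l)"
  using f5_in by (simp add: nat_pow_mult)

lemma f4_pow_f3: "f4 [^] (k::nat) \<otimes> f3 = f3 \<otimes> f4 [^] k" using group_commutes_pow[OF rel43 f4_in f3_in] .
lemma f4_pow_f2: "f4 [^] (k::nat) \<otimes> f2 = f2 \<otimes> f4 [^] k" using group_commutes_pow[OF rel42 f4_in f2_in] .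

lemma f4_pow_f1: "f4 [^] (k::nat) \<otimes> f1 = f1 \<otimes> (f4 [^] k \<otimes> f5 [^] k)"
  using pow_commutator_rule[OF f1_in f4_in f5_in rel41 f5_central[OF f4_in]] .

lemma f3_pow_f1: "f3 [^] (k::nat) \<otimes> f1 = f1 \<otimes> (f3 [^] k \<otimes> f4 [^] k)"
  using pow_commutator_rule[OF f1_in f3_in f4_in rel31 rel43] .

lemma f3_pow_f2: "f3 [^] (k::nat) \<otimes> f2 = f2 \<otimes> (f3 [^] k \<otimes> f5 [^] k)"
  using pow_commutator_rule[OF f2_in f3_in f5_in rel32 f5_central[OF f3_in]] .

lemma f2_pow_f1: "f2 [^] (k::nat) \<otimes> f1 = f1 \<otimes> (f2 [^] k \<otimes> (f3 [^] k \<otimes> f5 [^] (k choose 2)))"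
proof (induction k)
  case 0 then show ?case using f_in by (simp add: numeral_2_eq_2)
next
  case (Suc k)
  have "f2 [^] Suc k \<otimes> f1 = f2 [^] k \<otimes> (f2 \<otimes> f1)" using f_in by (simp add: m_assoc)
  also have "\<dots> = (f2 [^] k \<otimes> f1) \<otimes> (f2 \<otimes> f3)" using f_in by (simp add: rel21 m_assoc)
  also have "\<dots> = f1 \<otimes> (f2 [^] k \<otimes> (f3 [^] k \<otimes> (f5 [^] (k choose 2) \<otimes> f2)) \<otimes> f3)" using f_in Suc by (simp add: m_assoc)
  also have "\<dots> = f1 \<otimes> (f2 [^] k \<otimes> ((f3 [^] k \<otimes> f2) \<otimes> f5 [^] (k choose 2)) \<otimes> f3)" using f_in by (simp add: f5_pow_central m_assoc)
  also have "\<dots> = f1 \<otimes> (f2 [^] Suc k \<otimes> (f3 [^] k \<otimes> ((f5 [^] k \<otimes> f5 [^] (k choose 2)) \<otimes> f3)))" using f_in by (simp add: f3_pow_f2 m_assoc)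
  also have "\<dots> = f1 \<otimes> (f2 [^] Suc k \<otimes> (f3 [^] Suc k \<otimes> f5 [^] (Suc k choose 2)))"
    using f_in by (simp add: f5_pow_central m_assoc f5_pow_add choose2_Suc)
  finally show ?case .
qed

definition nf :: "nat \<Rightarrow> nat \<Rightarrow> nat \<Rightarrow> nat \<Rightarrow> nat \<Rightarrow> 'a" where
  "nf a1 a2 a3 a4 a5 = f1 [^] a1 \<otimes> (f2 [^] a2 \<otimes> (f3 [^] a3 \<otimes> (f4 [^] a4 \<otimes> f5 [^] a5)))"

lemma nf_closed[simp]: "nf a1 a2 a3 a4 a5 \<in> carrier G"
  using f_in by (simp add: nf_def)

lemma nf_mult_f1: "nf a1 a2 a3 a4 a5 \<otimes> f1 = nf (Suc a1) a2 (a3 + a2) (a4 + a3) (a5 + a4 + (a2 choose 2))"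
proof -
  have "nf a1 a2 a3 a4 a5 \<otimes> f1 = f1 [^] a1 \<otimes> (f2 [^] a2 \<otimes> (f3 [^] a3 \<otimes> (f4 [^] a4 \<otimes> (f5 [^] a5 \<otimes> f1))))"
    using f_in by (simp add: nf_def m_assoc)
  also have "\<dots> = f1 [^] a1 \<otimes> (f2 [^] a2 \<otimes> (f3 [^] a3 \<otimes> ((f4 [^] a4 \<otimes> f1) \<otimes> f5 [^] a5)))"
    using f_in by (simp add: f5_pow_central[OF f1_in] m_assoc)
  also have "\<dots> = f1 [^] a1 \<otimes> (f2 [^] a2 \<otimes> ((f3 [^] a3 \<otimes> f1) \<otimes> (f4 [^] a4 \<otimes> (f5 [^] a4 \<otimes> f5 [^] a5))))"
    using f_in by (simp add: f4_pow_f1 m_assoc)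
  also have "\<dots> = f1 [^] a1 \<otimes> ((f2 [^] a2 \<otimes> f1) \<otimes> (f3 [^] a3 \<otimes> (f4 [^] a3 \<otimes> (f4 [^] a4 \<otimes> (f5 [^] a4 \<otimes> f5 [^] a5)))))"
    using f_in by (simp add: f3_pow_f1 m_assoc)
  also have "\<dots> = (f1 [^] a1 \<otimes> f1) \<otimes> (f2 [^] a2 \<otimes> (f3 [^] a2 \<otimes> (f5 [^] (a2 choose 2) \<otimes> (f3 [^] a3 \<otimes> (f4 [^] a3 \<otimes> (f4 [^] a4 \<otimes> (f5 [^] a4 \<otimes> f5 [^] a5)))))))"
    using f_in by (simp add: f2_pow_f1 m_assoc)
  also have "\<dots> = f1 [^] Suc a1 \<otimes> (f2 [^] a2 \<otimes> (f3 [^] a2 \<otimes> (f3 [^] a3 \<otimes> (f4 [^] a3 \<otimes> (f4 [^] a4 \<otimes> (f5 [^] (a2 choose 2) \<otimes> (f5 [^] a4 \<otimes> f5 [^] a5)))))))"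
    using f_in by (simp add: m_assoc f5_pow_central_right[of "f3 [^] a3"] f5_pow_central_right[of "f4 [^] a3"] f5_pow_central_right[of "f4 [^] a4"])
  also have "\<dots> = nf (Suc a1) a2 (a3 + a2) (a4 + a3) (a5 + a4 + (a2 choose 2))"
    using f_in by (simp add: nf_def nat_pow_mult m_assoc[symmetric] add.commute add.left_commute)
  finally show ?thesis .
qed

lemma nf_mult_f2: "nf a1 a2 a3 a4 a5 \<otimes> f2 = nf a1 (Suc a2) a3 a4 (a5 + a3)"
proof -
  have "nf a1 a2 a3 a4 a5 \<otimes> f2 = f1 [^] a1 \<otimes> (f2 [^] a2 \<otimes> (f3 [^] a3 \<otimes> (f4 [^] a4 \<otimes> (f5 [^] a5 \<otimes> f2))))"
    using f_in by (simp add: nf_def m_assoc)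
  also have "\<dots> = f1 [^] a1 \<otimes> (f2 [^] a2 \<otimes> (f3 [^] a3 \<otimes> ((f4 [^] a4 \<otimes> f2) \<otimes> f5 [^] a5)))"
    using f_in by (simp add: f5_pow_central[OF f2_in] m_assoc)
  also have "\<dots> = f1 [^] a1 \<otimes> (f2 [^] a2 \<otimes> ((f3 [^] a3 \<otimes> f2) \<otimes> (f4 [^] a4 \<otimes> f5 [^] a5)))"
    using f_in by (simp add: f4_pow_f2 m_assoc)
  also have "\<dots> = f1 [^] a1 \<otimes> ((f2 [^] a2 \<otimes> f2) \<otimes> (f3 [^] a3 \<otimes> (f5 [^] a3 \<otimes> (f4 [^] a4 \<otimes> f5 [^] a5))))"
    using f_in by (simp add: f3_pow_f2 m_assoc)
  also have "\<dots> = f1 [^] a1 \<otimes> (f2 [^] Suc a2 \<otimes> (f3 [^] a3 \<otimes> (f4 [^] a4 \<otimes> (f5 [^] a3 \<otimes> f5 [^] a5))))"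
    using f_in by (simp add: f5_pow_central_right[of "f4 [^] a4"] m_assoc)
  also have "\<dots> = nf a1 (Suc a2) a3 a4 (a5 + a3)"
    using f_in by (simp add: nf_def nat_pow_mult add.commute)
  finally show ?thesis .
qed

lemma nf_mult_f3: "nf a1 a2 a3 a4 a5 \<otimes> f3 = nf a1 a2 (Suc a3) a4 a5"
proof -
  have "nf a1 a2 a3 a4 a5 \<otimes> f3 = f1 [^] a1 \<otimes> (f2 [^] a2 \<otimes> (f3 [^] a3 \<otimes> (f4 [^] a4 \<otimes> (f5 [^] a5 \<otimes> f3))))"
    using f_in by (simp add: nf_def m_assoc)
  also have "\<dots> = f1 [^] a1 \<otimes> (f2 [^] a2 \<otimes> (f3 [^] a3 \<otimes> ((f4 [^] a4 \<otimes> f3) \<otimes> f5 [^] a5)))"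
    using f_in by (simp add: f5_pow_central[OF f3_in] m_assoc)
  also have "\<dots> = f1 [^] a1 \<otimes> (f2 [^] a2 \<otimes> ((f3 [^] a3 \<otimes> f3) \<otimes> (f4 [^] a4 \<otimes> f5 [^] a5)))"
    using f_in by (simp add: f4_pow_f3 m_assoc)
  also have "\<dots> = nf a1 a2 (Suc a3) a4 a5"
    using f_in by (simp add: nf_def)
  finally show ?thesis .
qed

lemma nf_mult_f4: "nf a1 a2 a3 a4 a5 \<otimes> f4 = nf a1 a2 a3 (Suc a4) a5"
proof -
  have "nf a1 a2 a3 a4 a5 \<otimes> f4 = f1 [^] a1 \<otimes> (f2 [^] a2 \<otimes> (f3 [^] a3 \<otimes> (f4 [^] a4 \<otimes> (f5 [^] a5 \<otimes> f4))))"
    using f_in by (simp add: nf_def m_assoc)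
  also have "\<dots> = f1 [^] a1 \<otimes> (f2 [^] a2 \<otimes> (f3 [^] a3 \<otimes> ((f4 [^] a4 \<otimes> f4) \<otimes> f5 [^] a5)))"
    using f_in by (simp add: f5_pow_central[OF f4_in] m_assoc)
  also have "\<dots> = nf a1 a2 a3 (Suc a4) a5"
    using f_in by (simp add: nf_def)
  finally show ?thesis .
qed

lemma nf_mult_f5: "nf a1 a2 a3 a4 a5 \<otimes> f5 = nf a1 a2 a3 a4 (Suc a5)"
  using f_in by (simp add: nf_def m_assoc)

lemma nf_mult_f1_pow: "nf a1 a2 a3 a4 a5 \<otimes> f1 [^] (k::nat) = nf (a1 + k) a2 (a3 + k*a2) (a4 + k*a3 + (k choose 2)*a2)
   (a5 + k*a4 + (k choose 2)*a3 + (k choose 3)*a2 + k*(a2 choose 2))"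
proof (induction k)
  case 0 then show ?case by (simp add: numeral_2_eq_2 numeral_3_eq_3)
next
  case (Suc k)
  have "nf a1 a2 a3 a4 a5 \<otimes> f1 [^] Suc k = (nf a1 a2 a3 a4 a5 \<otimes> f1 [^] k) \<otimes> f1"
    using f_in by (simp add: m_assoc)
  also have "\<dots> = nf (a1 + Suc k) a2 (a3 + Suc k*a2) (a4 + Suc k*a3 + (Suc k choose 2)*a2)
   (a5 + Suc k*a4 + (Suc k choose 2)*a3 + (Suc k choose 3)*a2 + Suc k*(a2 choose 2))"
    unfolding Suc nf_mult_f1 by (simp add: choose2_Suc choose3_Suc algebra_simps)
  finally show ?case .
qed

lemma nf_mult_f2_pow: "nf a1 a2 a3 a4 a5 \<otimes> f2 [^] (k::nat) = nf a1 (a2 + k) a3 a4 (a5 + k*a3)"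
  by (induction k) (use f_in in \<open>simp_all add: m_assoc[symmetric] nf_mult_f2 algebra_simps\<close>)

lemma nf_mult_f3_pow: "nf a1 a2 a3 a4 a5 \<otimes> f3 [^] (k::nat) = nf a1 a2 (a3 + k) a4 a5"
  by (induction k) (use f_in in \<open>simp_all add: m_assoc[symmetric] nf_mult_f3 algebra_simps\<close>)

lemma nf_mult_f4_pow: "nf a1 a2 a3 a4 a5 \<otimes> f4 [^] (k::nat) = nf a1 a2 a3 (a4 + k) a5"
  by (induction k) (use f_in in \<open>simp_all add: m_assoc[symmetric] nf_mult_f4 algebra_simps\<close>)

lemma nf_mult_f5_pow: "nf a1 a2 a3 a4 a5 \<otimes> f5 [^] (k::nat) = nf a1 a2 a3 a4 (a5 + k)"
  by (induction k) (use f_in in \<open>simp_all add: m_assoc[symmetric] nf_mult_f5 algebra_simps\<close>)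

lemma nf_mult: "nf a1 a2 a3 a4 a5 \<otimes> nf b1 b2 b3 b4 b5 = nf (a1+b1) (a2+b2) (a3 + b1*a2 + b3)
   (a4 + b1*a3 + (b1 choose 2)*a2 + b4)
   (a5 + b1*a4 + (b1 choose 2)*a3 + (b1 choose 3)*a2 + b1*(a2 choose 2) + b2*(a3 + b1*a2) + b5)"
proof -
  have "nf a1 a2 a3 a4 a5 \<otimes> nf b1 b2 b3 b4 b5 =
     ((((nf a1 a2 a3 a4 a5 \<otimes> f1 [^] b1) \<otimes> f2 [^] b2) \<otimes> f3 [^] b3) \<otimes> f4 [^] b4) \<otimes> f5 [^] b5"
    using f_in by (simp add: nf_def m_assoc)
  then show ?thesis by (simp add: nf_mult_f1_pow nf_mult_f2_pow nf_mult_f3_pow nf_mult_f4_pow nf_mult_f5_pow)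
qed

lemma f4_pow_mod: "f4 [^] (n::nat) = f4 [^] (n mod 3)" using pow_div_mod[OF f4_in, of n 3] f4_in by (simp add: pow4)
lemma f5_pow_mod: "f5 [^] (n::nat) = f5 [^] (n mod 3)" using pow_div_mod[OF f5_in, of n 3] f5_in by (simp add: pow5)
lemma f1_pow_reduce: "f1 [^] (n::nat) = f1 [^] (n mod 3) \<otimes> f5 [^] (e * (n div 3))"
  using pow_div_mod[OF f1_in, of n 3] f5_in by (simp add: pow1 nat_pow_pow)
lemma f2_pow_reduce: "f2 [^] (n::nat) = f2 [^] (n mod 3) \<otimes> f4 [^] (2 * (n div 3))"
  using pow_div_mod[OF f2_in, of n 3] f4_in by (simp add: pow2_sq nat_pow_pow)
lemma f3_pow_reduce: "f3 [^] (n::nat) = f3 [^] (n mod 3) \<otimes> f5 [^] (2 * (n div 3))"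
  using pow_div_mod[OF f3_in, of n 3] f5_in by (simp add: pow3_sq nat_pow_pow)

lemma f4_f3_pow_swap: "r \<in> carrier G \<Longrightarrow> f4 [^] (p::nat) \<otimes> (f3 [^] (q::nat) \<otimes> r) = f3 [^] q \<otimes> (f4 [^] p \<otimes> r)"
  using pow_commute[OF f4_in f3_in rel43, of p q] f_in by (simp add: m_assoc[symmetric])

lemma nf_reduce: "nf a1 a2 a3 a4 a5 = nf (a1 mod 3) (a2 mod 3) (a3 mod 3) ((a4 + 2*(a2 div 3)) mod 3)
     ((a5 + e*(a1 div 3) + 2*(a3 div 3)) mod 3)"
proof -
  have "nf a1 a2 a3 a4 a5 = (f1 [^] (a1 mod 3) \<otimes> f5 [^] (e * (a1 div 3))) \<otimes> ((f2 [^] (a2 mod 3) \<otimes> f4 [^] (2 * (a2 div 3)))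
     \<otimes> ((f3 [^] (a3 mod 3) \<otimes> f5 [^] (2 * (a3 div 3))) \<otimes> (f4 [^] a4 \<otimes> f5 [^] a5)))"
    unfolding nf_def by (simp add: f1_pow_reduce[of a1] f2_pow_reduce[of a2] f3_pow_reduce[of a3] del: nat_pow_closed)
  also have "\<dots> = f1 [^] (a1 mod 3) \<otimes> (f2 [^] (a2 mod 3) \<otimes> (f3 [^] (a3 mod 3) \<otimes> ((f4 [^] (2 * (a2 div 3)) \<otimes> f4 [^] a4) \<otimes> (f5 [^] (e * (a1 div 3)) \<otimes> (f5 [^] (2 * (a3 div 3)) \<otimes> f5 [^] a5)))))"
    using f_in by (simp add: m_assoc f5_pow_central_right[of "f2 [^] (a2 mod 3)"] f5_pow_central_right[of "f4 [^] (2 * (a2 div 3))"] f5_pow_central_right[of "f3 [^] (a3 mod 3)"]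
        f5_pow_central_right[of "f4 [^] a4"] f4_f3_pow_swap)
  also have "\<dots> = nf (a1 mod 3) (a2 mod 3) (a3 mod 3) ((a4 + 2*(a2 div 3)) mod 3)
     ((a5 + e*(a1 div 3) + 2*(a3 div 3)) mod 3)"
    using f_in unfolding nf_def by (simp add: nat_pow_mult algebra_simps) (metis f4_pow_mod f5_pow_mod)
  finally show ?thesis .
qed

definition elem :: "exps \<Rightarrow> 'a" where "elem a = (case a of (a1,a2,a3,a4,a5) \<Rightarrow> nf a1 a2 a3 a4 a5)"

lemma elem_closed[simp]: "elem a \<in> carrier G"
  by (cases a) (simp add: elem_def)

lemma elem_mult: "elem a \<otimes> elem b = elem (exp_prod e a b)"
  by (cases a; cases b) (simp add: elem_def exp_prod_def nf_mult nf_reduce[of "_ + _"])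

lemma elem_zero: "elem (0,0,0,0,0) = \<one>" by (simp add: elem_def nf_def)
lemma elem_f1: "elem (1,0,0,0,0) = f1" using f_in by (simp add: elem_def nf_def)
lemma elem_f2: "elem (0,1,0,0,0) = f2" using f_in by (simp add: elem_def nf_def)
lemma elem_f3: "elem (0,0,1,0,0) = f3" using f_in by (simp add: elem_def nf_def)
lemma elem_f4: "elem (0,0,0,1,0) = f4" using f_in by (simp add: elem_def nf_def)
lemma elem_f5: "elem (0,0,0,0,1) = f5" using f_in by (simp add: elem_def nf_def)

lemma elem_image_mult: "x \<in> elem ` Exps \<Longrightarrow> y \<in> elem ` Exps \<Longrightarrow> x \<otimes> y \<in> elem ` Exps"
  using elem_mult exp_prod_in_Exps by auto

lemma elem_image_pow: "x \<in> elem ` Exps \<Longrightarrow> x [^] (n::nat) \<in> elem ` Exps"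
proof (induction n)
  case 0
  have "(0,0,0,0,0) \<in> Exps" by (simp add: Exps_def)
  then show ?case using elem_zero by (metis image_eqI nat_pow_0)
next
  case (Suc n) then show ?case using elem_image_mult by simp
qed

end

locale pc5_order = pc5 +
  assumes fin: "finite (carrier G)" and card_carrier: "card (carrier G) = 243"
    and gen: "generate G {f1, f2, f3, f4, f5} = carrier G"
begin

lemma elem_image_subgroup: "subgroup (elem ` Exps) G"
proof (rule subgroupI)
  show "elem ` Exps \<subseteq> carrier G" by auto
  show "elem ` Exps \<noteq> {}" using finite_Exps card_Exps by auto
  fix x y assume x: "x \<in> elem ` Exps" and y: "y \<in> elem ` Exps"
  show "x \<otimes> y \<in> elem ` Exps" using elem_image_mult x y .
  have xc: "x \<in> carrier G" using x by auto
  have o: "ord x \<ge> 1" using ord_ge_1[OF fin xc] .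
  have "x [^] (ord x - 1) \<otimes> x = x [^] ord x"
    using o xc by (metis Suc_diff_1 less_le_trans nat_pow_Suc zero_less_one)
  then have "x [^] (ord x - 1) \<otimes> x = \<one>" using xc by simp
  then have "inv x = x [^] (ord x - 1)" using xc by (metis inv_equality nat_pow_closed)
  then show "inv x \<in> elem ` Exps" using elem_image_pow x by simp
qed

lemma elem_image_carrier: "elem ` Exps = carrier G"
proof
  show "elem ` Exps \<subseteq> carrier G" by auto
  have "{f1, f2, f3, f4, f5} \<subseteq> elem ` Exps"
  proof -
    have "(1,0,0,0,0) \<in> Exps" "(0,1,0,0,0) \<in> Exps" "(0,0,1,0,0) \<in> Exps" "(0,0,0,1,0) \<in> Exps" "(0,0,0,0,1) \<in> Exps"
      by (simp_all add: Exps_def)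
    then show ?thesis using elem_f1 elem_f2 elem_f3 elem_f4 elem_f5 by (metis empty_subsetI image_eqI insert_subset)
  qed
  then show "carrier G \<subseteq> elem ` Exps" using generate_subgroup_incl[OF _ elem_image_subgroup] gen by blast
qed

(* Counting: |Exps| = |G| = 243, so elem is injective. *)
lemma elem_inj: "inj_on elem Exps"
  by (rule eq_card_imp_inj_on[OF finite_Exps]) (simp add: elem_image_carrier card_carrier card_Exps)

definition coord :: "'a \<Rightarrow> exps" where "coord g = the_inv_into Exps elem g"

lemma coord_in_Exps: "g \<in> carrier G \<Longrightarrow> coord g \<in> Exps"
  unfolding coord_def using elem_inj elem_image_carrier by (metis the_inv_into_into subset_refl)

lemma elem_coord: "g \<in> carrier G \<Longrightarrow> elem (coord g) = g"
  unfolding coord_def using elem_inj elem_image_carrier by (metis f_the_inv_into_f)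

lemma coord_elem: "a \<in> Exps \<Longrightarrow> coord (elem a) = a"
  unfolding coord_def using elem_inj by (simp add: the_inv_into_f_f)

lemma coord_mul: "g \<in> carrier G \<Longrightarrow> h \<in> carrier G \<Longrightarrow> coord (g \<otimes> h) = exp_prod e (coord g) (coord h)"
  by (metis elem_mult elem_coord coord_elem exp_prod_in_Exps)

lemma coord_of_elem: "coord (elem (a1,a2,a3,a4,a5)) = (a1,a2,a3,a4,a5)" if "a1<3" "a2<3" "a3<3" "a4<3" "a5<3"
  using coord_elem that by (simp add: Exps_def)

lemma coord_one: "coord \<one> = (0,0,0,0,0)"
  using coord_of_elem[of 0 0 0 0 0] elem_zero by simp

definition T3 :: "'a \<Rightarrow> 'a \<Rightarrow> nat" where
  "T3 g h = Tpoly (coord g) (coord h)"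

lemma T3_Zn_cocycle: "Zn_cocycle G 3 T3"
proof (unfold_locales)
  fix g h k assume g: "g \<in> carrier G" and h: "h \<in> carrier G" and k: "k \<in> carrier G"
  show "(T3 h k + T3 g (h \<otimes> k)) mod 3 = (T3 g h + T3 (g \<otimes> h) k) mod 3"
    unfolding T3_def coord_mul[OF g h] coord_mul[OF h k] by (rule Tpoly_cocycle)
qed (simp_all add: T3_def coord_one Tpoly_zero_left Tpoly_zero_right)

sublocale C: Zn_cocycle G 3 T3 by (rule T3_Zn_cocycle)

lemma T3_commuting:
  assumes "g \<in> carrier G" "h \<in> carrier G" "g \<otimes> h = h \<otimes> g"
  shows "T3 g h mod 3 = T3 h g mod 3"
  unfolding T3_def
  using assms Tpoly_commuting[OF coord_in_Exps coord_in_Exps, of g h e] coord_mul[of g h] coord_mul[of h g] by simp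

(* The relations [f3,f2] = f5 and [f4,f1] = f5 receive the values 1/3 and 0. *)
lemma T3_not_coboundary: "\<not> coboundary_on G (carrier G) C.cochain"
proof (rule not_coboundary_by_commutators[OF f2_in f3_in f1_in f4_in f5_in rel32 rel41])
  have e35: "coord (f3 \<otimes> f5) = (0,0,1,0,1)" and e45: "coord (f4 \<otimes> f5) = (0,0,0,1,1)"
    using coord_of_elem[of 0 0 1 0 1] coord_of_elem[of 0 0 0 1 1] f_in by (simp_all add: elem_def nf_def)
  have "coord f1 = (1,0,0,0,0)" using coord_of_elem[of 1 0 0 0 0] elem_f1 by simp
  moreover have "coord f2 = (0,1,0,0,0)" using coord_of_elem[of 0 1 0 0 0] elem_f2 by simp
  moreover have "coord f3 = (0,0,1,0,0)" using coord_of_elem[of 0 0 1 0 0] elem_f3 by simp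
  moreover have "coord f4 = (0,0,0,1,0)" using coord_of_elem[of 0 0 0 1 0] elem_f4 by simp
  moreover have "coord f5 = (0,0,0,0,1)" using coord_of_elem[of 0 0 0 0 1] elem_f5 by simp
  ultimately have cocycle_values: "(C.cochain f3 f2 - C.cochain f2 (f3 \<otimes> f5) - C.cochain f3 f5)
      - (C.cochain f4 f1 - C.cochain f1 (f4 \<otimes> f5) - C.cochain f4 f5) = 1/3"
    by (simp add: C.cochain_def T3_def e35 e45)
  have third: "(1/3 :: rat) \<notin> \<int>"
  proof
    assume "(1/3 :: rat) \<in> \<int>"
    then obtain m :: int where "(1/3 :: rat) = of_int m" by (auto elim: Ints_cases)
    then have "(1::rat) = of_int (3 * m)" by simp
    then have "(1::int) = 3 * m" by (metis of_int_eq_1_iff)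
    then show False by presburger
  qed
  show "(C.cochain f3 f2 - C.cochain f2 (f3 \<otimes> f5) - C.cochain f3 f5)
      - (C.cochain f4 f1 - C.cochain f1 (f4 \<otimes> f5) - C.cochain f4 f5) \<notin> \<int>"
    unfolding cocycle_values by (rule third)
qed

theorem B0_nontrivial: "B0_nontrivial G"
  by (rule C.B0_nontrivial_criterion[OF fin T3_commuting T3_not_coboundary])

end

(* The abelianization in case (a) (in fact in all cases): the first two exponents define a
   homomorphism phi onto C3 x C3 whose kernel is generated by the commutators f3, f4, f5. *)
abbreviation Z33 :: "(int \<times> int) monoid" where
  "Z33 \<equiv> integer_mod_group 3 \<times>\<times> integer_mod_group 3"

lemma Z33_group: "group Z33" by (simp add: DirProd_group)

lemma Z33_comm: "comm_group Z33"
proof -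
  interpret Z: group Z33 by (rule Z33_group)
  show ?thesis by (rule Z.group_comm_groupI) (auto simp: mult_DirProd' add.commute)
qed

context pc5_order begin

definition phi :: "'a \<Rightarrow> int \<times> int" where
  "phi g = (int (fst (coord g)), int (fst (snd (coord g))))"

lemma phi_hom: "group_hom G Z33 phi"
proof -
  have "phi \<in> hom G Z33"
  proof (rule homI)
    fix g assume g: "g \<in> carrier G"
    obtain a1 a2 a3 a4 a5 where c: "coord g = (a1,a2,a3,a4,a5)" by (cases "coord g") auto
    then show "phi g \<in> carrier Z33" using coord_in_Exps[OF g]
      by (simp add: phi_def Exps_def carrier_integer_mod_group)
  next
    fix g h assume g: "g \<in> carrier G" and h: "h \<in> carrier G"
    obtain a1 a2 a3 a4 a5 where ca: "coord g = (a1,a2,a3,a4,a5)" by (cases "coord g") auto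
    obtain b1 b2 b3 b4 b5 where cb: "coord h = (b1,b2,b3,b4,b5)" by (cases "coord h") auto
    show "phi (g \<otimes> h) = phi g \<otimes>\<^bsub>Z33\<^esub> phi h"
      using coord_mul[OF g h] ca cb by (simp add: phi_def exp_prod_def zmod_int)
  qed
  then show ?thesis
    by (intro group_hom.intro group_hom_axioms.intro is_group Z33_group)
qed

lemma phi_surj: "phi ` carrier G = carrier Z33"
proof
  show "phi ` carrier G \<subseteq> carrier Z33" by (rule image_subsetI) (rule group_hom.hom_closed[OF phi_hom])
  show "carrier Z33 \<subseteq> phi ` carrier G"
  proof
    fix z assume z: "z \<in> carrier Z33"
    obtain i j where ij: "z = (i, j)" "0 \<le> i" "i < 3" "0 \<le> j" "j < 3"
      using z by (cases z) (auto simp: carrier_integer_mod_group)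
    have "coord (elem (nat i, nat j, 0, 0, 0)) = (nat i, nat j, 0, 0, 0)"
      using ij by (intro coord_of_elem) auto
    then have "phi (elem (nat i, nat j, 0, 0, 0)) = z" using ij by (simp add: phi_def)
    then show "z \<in> phi ` carrier G" by (metis elem_closed image_eqI)
  qed
qed

theorem abelianization: "G Mod (derived G (carrier G)) \<cong> Z33"
proof -
  have d3: "f3 \<in> derived G (carrier G)" using commutator_in_derived[OF f2_in f1_in] comm21 by simp
  have d4: "f4 \<in> derived G (carrier G)" using commutator_in_derived[OF f3_in f1_in] comm31 by simp
  have d5: "f5 \<in> derived G (carrier G)" using commutator_in_derived[OF f4_in f1_in] comm41 by simp
  interpret h: group_hom G Z33 phi by (rule phi_hom)
  have ker: "kernel G Z33 phi = derived G (carrier G)"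
  proof
    have "phi ` derived G (carrier G) = derived Z33 (phi ` carrier G)"
      using h.derived_img[of "carrier G"] by simp
    also have "\<dots> = {\<one>\<^bsub>Z33\<^esub>}"
      using comm_group.derived_eq_singleton[OF Z33_comm] phi_surj by simp
    finally have "phi ` derived G (carrier G) = {\<one>\<^bsub>Z33\<^esub>}" .
    then show "derived G (carrier G) \<subseteq> kernel G Z33 phi"
      unfolding kernel_def using derived_in_carrier[of "carrier G"] by auto
  next
    show "kernel G Z33 phi \<subseteq> derived G (carrier G)"
    proof
      fix g assume g: "g \<in> kernel G Z33 phi"
      then have gc: "g \<in> carrier G" and p: "phi g = (0, 0)" unfolding kernel_def by auto
      obtain a1 a2 a3 a4 a5 where ca: "coord g = (a1,a2,a3,a4,a5)" by (cases "coord g") auto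
      have "a1 = 0" "a2 = 0" using p ca by (auto simp: phi_def)
      then have "g = f3 [^] a3 \<otimes> (f4 [^] a4 \<otimes> f5 [^] a5)"
        using elem_coord[OF gc] ca f_in by (simp add: elem_def nf_def)
      moreover have "subgroup (derived G (carrier G)) G" by (rule derived_is_subgroup) simp
      ultimately show "g \<in> derived G (carrier G)"
        using d3 d4 d5 by (simp add: subgroup.m_closed subgroup_nat_pow_closed)
    qed
  qed
  show ?thesis using h.FactGroup_iso[OF phi_surj] ker by simp
qed

end

theorem mainTheorem5:
  fixes G :: "('a, 'b) monoid_scheme" and f1 f2 f3 f4 f5 :: 'a
  assumes grp: "group G"
    and fin: "finite (carrier G)"
    and ord: "order G = 3 ^ 5"
    and mem: "f1 \<in> carrier G" "f2 \<in> carrier G" "f3 \<in> carrier G" "f4 \<in> carrier G" "f5 \<in> carrier G"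
    and gen: "generate G {f1, f2, f3, f4, f5} = carrier G"
    and cent: "f5 \<in> center G"
    and c21: "comm G f2 f1 = f3"
    and c31: "comm G f3 f1 = f4"
    and c41: "comm G f4 f1 = f5"
    and c32: "comm G f3 f2 = f5"
    and c42: "comm G f4 f2 = \<one>\<^bsub>G\<^esub>"
    and c43: "comm G f4 f3 = \<one>\<^bsub>G\<^esub>"
    and pow: "(f1 [^]\<^bsub>G\<^esub> (3::nat) = \<one>\<^bsub>G\<^esub> \<and> f4 [^]\<^bsub>G\<^esub> (3::nat) = \<one>\<^bsub>G\<^esub> \<and>
               f5 [^]\<^bsub>G\<^esub> (3::nat) = \<one>\<^bsub>G\<^esub> \<and> f2 [^]\<^bsub>G\<^esub> (3::nat) = inv\<^bsub>G\<^esub> f4 \<and>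
               f3 [^]\<^bsub>G\<^esub> (3::nat) = inv\<^bsub>G\<^esub> f5)
            \<or> (f4 [^]\<^bsub>G\<^esub> (3::nat) = \<one>\<^bsub>G\<^esub> \<and> f5 [^]\<^bsub>G\<^esub> (3::nat) = \<one>\<^bsub>G\<^esub> \<and>
               f1 [^]\<^bsub>G\<^esub> (3::nat) = f5 \<and> f2 [^]\<^bsub>G\<^esub> (3::nat) = inv\<^bsub>G\<^esub> f4 \<and>
               f3 [^]\<^bsub>G\<^esub> (3::nat) = inv\<^bsub>G\<^esub> f5)
            \<or> (f4 [^]\<^bsub>G\<^esub> (3::nat) = \<one>\<^bsub>G\<^esub> \<and> f5 [^]\<^bsub>G\<^esub> (3::nat) = \<one>\<^bsub>G\<^esub> \<and>
               f1 [^]\<^bsub>G\<^esub> (3::nat) = inv\<^bsub>G\<^esub> f5 \<and> f3 [^]\<^bsub>G\<^esub> (3::nat) = inv\<^bsub>G\<^esub> f5 \<and>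
               f2 [^]\<^bsub>G\<^esub> (3::nat) = inv\<^bsub>G\<^esub> f4)"
  shows "B0_nontrivial G \<and>
         ((f1 [^]\<^bsub>G\<^esub> (3::nat) = \<one>\<^bsub>G\<^esub> \<and> f4 [^]\<^bsub>G\<^esub> (3::nat) = \<one>\<^bsub>G\<^esub> \<and>
           f5 [^]\<^bsub>G\<^esub> (3::nat) = \<one>\<^bsub>G\<^esub> \<and> f2 [^]\<^bsub>G\<^esub> (3::nat) = inv\<^bsub>G\<^esub> f4 \<and>
           f3 [^]\<^bsub>G\<^esub> (3::nat) = inv\<^bsub>G\<^esub> f5)
          \<longrightarrow> G Mod (derived G (carrier G)) \<cong> (integer_mod_group 3 \<times>\<times> integer_mod_group 3))"
proof -
  have pow_common: "f2 [^]\<^bsub>G\<^esub> (3::nat) = inv\<^bsub>G\<^esub> f4" "f3 [^]\<^bsub>G\<^esub> (3::nat) = inv\<^bsub>G\<^esub> f5"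
      "f4 [^]\<^bsub>G\<^esub> (3::nat) = \<one>\<^bsub>G\<^esub>" "f5 [^]\<^bsub>G\<^esub> (3::nat) = \<one>\<^bsub>G\<^esub>"
    using pow by auto
  obtain e :: nat where pow1: "f1 [^]\<^bsub>G\<^esub> (3::nat) = f5 [^]\<^bsub>G\<^esub> e"
    using group.power_if_cube_root_case[OF grp mem(5) pow_common(4)] pow by blast
  interpret pc5_order G f1 f2 f3 f4 f5 e
    by (intro pc5_order.intro pc5.intro pc5_axioms.intro pc5_order_axioms.intro)
       (use grp fin ord mem gen cent c21 c31 c41 c32 c42 c43 pow1 pow_common in \<open>simp_all add: order_def\<close>)
  show ?thesis using B0_nontrivial abelianization by simp
qed

end
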